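(* Let $X$ be an infinite compact metrizable space, $h\colon X\to X$ a minimal homeomorphism, and suppose $(X,h)$ has the topological small boundary property. Let $\varepsilon>0$. Then for any closed $F\subset X$ and open $U\subset X$ with $F\subset U$, there exist a closed set $K\subset X$ and an open set $V\subset X$ with $F\subset K\subset V\subset\overline{V}\subset U$ and $\mu(V\setminus K)<\varepsilon$ for all $\mu\in M_h(X)$.
   Context: $M_h(X)$ denotes the set of $h$-invariant Borel probability measures on $X$. A closed set $F\subset X$ is topologically $h$-small if there is $m\in\mathbb{Z}_{+}$ such that whenever $d(0),\dots,d(m)$ are $m+1$ distinct integers, $h^{d(0)}(F)\cap\cdots\cap h^{d(m)}(F)=\varnothing$. $(X,h)$ has the topological small boundary property if whenever $F,K\subset X$ are disjoint compact sets, there exist open sets $U,V\subset X$ with $F\subset U$, $K\subset V$, $\overline{U}\cap\overline{V}=\varnothing$ and $\partial U$ (boundary of $U$) topologically $h$-small. *)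

theory Defs
  imports "HOL-Probability.Probability"
begin

definition zpow :: "('a \<Rightarrow> 'a) \<Rightarrow> int \<Rightarrow> 'a \<Rightarrow> 'a" where
  "zpow h n = (if 0 \<le> n then h ^^ nat n else inv h ^^ nat (- n))"

definition is_homeo :: "('a::topological_space \<Rightarrow> 'a) \<Rightarrow> bool" where
  "is_homeo h \<longleftrightarrow> (\<exists>g. homeomorphism UNIV UNIV h g)"

definition minimal_homeo :: "('a::topological_space \<Rightarrow> 'a) \<Rightarrow> bool" where
  "minimal_homeo h \<longleftrightarrow> is_homeo h \<and>
     (\<forall>C. closed C \<and> h ` C = C \<longrightarrow> C = {} \<or> C = UNIV)"

definition inv_measures :: "('a::topological_space \<Rightarrow> 'a) \<Rightarrow> 'a measure set" where
  "inv_measures h = {\<mu>. prob_space \<mu> \<and> sets \<mu> = sets borel \<and>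
      (\<forall>A\<in>sets borel. emeasure \<mu> (h -` A) = emeasure \<mu> A)}"

definition top_small :: "('a::topological_space \<Rightarrow> 'a) \<Rightarrow> 'a set \<Rightarrow> bool" where
  "top_small h F \<longleftrightarrow> closed F \<and> (\<exists>m::nat. \<forall>d::nat \<Rightarrow> int. inj_on d {0..m} \<longrightarrow>
      (\<Inter>i\<in>{0..m}. zpow h (d i) ` F) = {})"

definition top_small_boundary_property :: "('a::topological_space \<Rightarrow> 'a) \<Rightarrow> bool" where
  "top_small_boundary_property h \<longleftrightarrow>
     (\<forall>F K. compact F \<and> compact K \<and> F \<inter> K = {} \<longrightarrow>
        (\<exists>U V. open U \<and> open V \<and> F \<subseteq> U \<and> K \<subseteq> V \<and> closure U \<inter> closure V = {}
               \<and> top_small h (frontier U)))"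

end

theory Submission
  imports Defs
begin

text \<open>
  The small boundary property yields an open \<open>W\<close> with \<open>F \<subseteq> W\<close>, \<open>closure W \<subseteq> U\<close>
  and topologically small frontier: no orbit meets \<open>frontier W\<close> at more than \<open>m\<close> times.
  By compactness some open \<open>N \<supseteq> frontier W\<close> is still met at most \<open>m\<close> times along every
  orbit segment of length \<open>L\<close>; averaging the indicators of \<open>h\<^sup>-\<^sup>j N\<close>, \<open>j < L\<close>, against an
  invariant measure gives \<open>\<mu> N \<le> m / L < \<epsilon>\<close> for \<open>L\<close> large.  Then \<open>K = closure W\<close> and
  \<open>V = (W \<union> N) \<inter> U\<^sub>1\<close>, for an open \<open>U\<^sub>1\<close> with \<open>closure W \<subseteq> U\<^sub>1 \<subseteq> closure U\<^sub>1 \<subseteq> U\<close>, work,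
  since \<open>V - K \<subseteq> N\<close>.
\<close>

lemma continuous_on_funpow:
  fixes f :: "'a::topological_space \<Rightarrow> 'a"
  assumes "continuous_on UNIV f"
  shows "continuous_on UNIV (f ^^ n)"
proof (induction n)
  case (Suc n)
  then show ?case
    using continuous_on_compose[OF Suc continuous_on_subset[OF assms]] by simp
qed (simp add: id_def)

lemma zpow_minus_of_nat: "zpow h (- int k) = inv h ^^ k"
  unfolding zpow_def by (cases "k = 0") auto

lemma top_small_bounded_visits:
  assumes "top_small h E" "bij h"
  obtains m where "\<And>S x. finite S \<Longrightarrow> card S = Suc m \<Longrightarrow> \<exists>j\<in>S. (h ^^ j) x \<notin> E"
proof -
  from assms(1) obtain m where m: "\<And>d::nat \<Rightarrow> int. inj_on d {0..m} \<Longrightarrow>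
      (\<Inter>i\<in>{0..m}. zpow h (d i) ` E) = {}"
    unfolding top_small_def by blast
  have "\<exists>j\<in>S. (h ^^ j) x \<notin> E" if S: "finite S" "card S = Suc m" for S x
  proof (rule ccontr)
    assume "\<not> (\<exists>j\<in>S. (h ^^ j) x \<notin> E)"
    then have visits: "\<And>j. j \<in> S \<Longrightarrow> (h ^^ j) x \<in> E" by blast
    have range: "{0..<card S} = {0..m}" using S(2) by auto
    obtain f where f: "bij_betw f {0..m} S"
      using ex_bij_betw_nat_finite[OF S(1)] by (auto simp: range)
    define d where "d i = - int (f i)" for i
    have "inj_on d {0..m}" using f unfolding d_def bij_betw_def inj_on_def by auto
    moreover have "x \<in> zpow h (d i) ` E" if "i \<in> {0..m}" for i
    proof -
      have "x = (inv h ^^ f i) ((h ^^ f i) x)"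
        using inv_fn_o_fn_is_id[OF assms(2)] by (metis comp_apply)
      moreover have "(h ^^ f i) x \<in> E" using visits f that by (auto simp: bij_betw_def)
      ultimately show ?thesis unfolding d_def zpow_minus_of_nat by blast
    qed
    ultimately show False using m by blast
  qed
  then show ?thesis using that by blast
qed

lemma open_nbhd_bounded_visits:
  fixes h :: "'a::metric_space \<Rightarrow> 'a"
  assumes "compact (UNIV :: 'a set)" "continuous_on UNIV h" "closed E"
    and visits: "\<And>S x. finite S \<Longrightarrow> card S = Suc m \<Longrightarrow> \<exists>j\<in>S. (h ^^ j) x \<notin> E"
  shows "\<exists>N. open N \<and> E \<subseteq> N \<and> (\<forall>x. card {j\<in>{..<L}. (h ^^ j) x \<in> N} \<le> m)"
proof (cases "E = {}")
  case True
  then show ?thesis by (intro exI[of _ "{}"]) auto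
next
  case False
  define SS where "SS = {S. S \<subseteq> {..<L} \<and> card S = Suc m}"
  define g where "g S x = (\<Sum>j\<in>S. infdist ((h ^^ j) x) E)" for S x
  have "\<exists>\<delta>>0. \<forall>x. \<delta> \<le> g S x" if S: "S \<in> SS" for S
  proof -
    have "finite S" using S unfolding SS_def by (auto intro: finite_subset)
    have "continuous_on UNIV (g S)" unfolding g_def
      by (intro continuous_on_sum continuous_on_infdist continuous_on_funpow assms(2))
    then obtain x0 where x0: "\<And>y. g S x0 \<le> g S y"
      using continuous_attains_inf[OF assms(1)] by blast
    have "g S x0 > 0"
    proof (rule ccontr)
      assume "\<not> g S x0 > 0"
      then have "g S x0 = 0"
        unfolding g_def by (simp add: infdist_nonneg sum_nonneg order_less_le)
      then have "\<forall>j\<in>S. infdist ((h ^^ j) x0) E = 0"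
        unfolding g_def using \<open>finite S\<close> by (simp add: sum_nonneg_eq_0_iff infdist_nonneg)
      then have "\<forall>j\<in>S. (h ^^ j) x0 \<in> E"
        using in_closed_iff_infdist_zero[OF assms(3) False] by blast
      then show False using visits \<open>finite S\<close> S unfolding SS_def by blast
    qed
    then show ?thesis using x0 by blast
  qed
  then obtain \<delta>S where \<delta>S: "\<And>S. S \<in> SS \<Longrightarrow> \<delta>S S > 0 \<and> (\<forall>x. \<delta>S S \<le> g S x)" by metis
  define \<delta> where "\<delta> = Min (insert 1 (\<delta>S ` SS))"
  have "finite SS" unfolding SS_def by simp
  then have \<delta>_pos: "\<delta> > 0" and \<delta>_le: "\<And>S. S \<in> SS \<Longrightarrow> \<delta> \<le> \<delta>S S"
    unfolding \<delta>_def using \<delta>S by auto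
  define N where "N = {x. infdist x E < \<delta> / Suc m}"
  have "open N" unfolding N_def
    by (intro open_Collect_less continuous_on_infdist continuous_on_id continuous_on_const)
  moreover have "E \<subseteq> N" unfolding N_def using \<delta>_pos by auto
  moreover have "card {j\<in>{..<L}. (h ^^ j) x \<in> N} \<le> m" for x
  proof (rule ccontr)
    assume "\<not> ?thesis"
    then obtain S where S: "S \<subseteq> {j\<in>{..<L}. (h ^^ j) x \<in> N}" "card S = Suc m" "finite S"
      using obtain_subset_with_card_n[of "Suc m" "{j\<in>{..<L}. (h ^^ j) x \<in> N}"] by force
    then have "S \<in> SS" unfolding SS_def by auto
    have "g S x < (\<Sum>j\<in>S. \<delta> / Suc m)" unfolding g_def
      using S by (intro sum_strict_mono) (auto simp: N_def)
    also have "\<dots> = \<delta>" using S(2) by simp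
    also have "\<dots> \<le> g S x" using \<delta>_le \<delta>S \<open>S \<in> SS\<close> by (meson order_trans)
    finally show False by simp
  qed
  ultimately show ?thesis by blast
qed

lemma inv_measures_measure_funpow_vimage:
  fixes h :: "'a::topological_space \<Rightarrow> 'a"
  assumes "\<mu> \<in> inv_measures h" "continuous_on UNIV h" "A \<in> sets borel"
  shows "measure \<mu> ((h ^^ j) -` A) = measure \<mu> A"
proof (induction j)
  case (Suc j)
  have "(h ^^ j) -` A \<in> sets borel"
    using borel_measurable_continuous_onI[OF continuous_on_funpow[OF assms(2)]] assms(3)
    by (metis measurable_sets space_borel vimage_Int inf_top.right_neutral)
  then have "measure \<mu> (h -` ((h ^^ j) -` A)) = measure \<mu> ((h ^^ j) -` A)"
    using assms(1) unfolding inv_measures_def measure_def by simp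
  moreover have "(h ^^ Suc j) -` A = h -` ((h ^^ j) -` A)"
    by (simp only: funpow_Suc_right vimage_comp)
  ultimately show ?case using Suc.IH by (simp only:)
qed simp

lemma inv_measures_measure_le_visits:
  fixes h :: "'a::topological_space \<Rightarrow> 'a" and L m :: nat
  assumes \<mu>: "\<mu> \<in> inv_measures h" and "continuous_on UNIV h" "open N"
    and visits: "\<And>x. card {j\<in>{..<L}. (h ^^ j) x \<in> N} \<le> m"
  shows "L * measure \<mu> N \<le> m"
proof -
  interpret prob_space \<mu> using \<mu> unfolding inv_measures_def by simp
  have sets: "sets \<mu> = sets borel" using \<mu> unfolding inv_measures_def by simp
  then have space: "space \<mu> = UNIV" by (simp add: sets_eq_imp_space_eq)
  have pre_sets: "(h ^^ j) -` N \<in> sets \<mu>" for j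
    using continuous_on_funpow[OF assms(2), of j] \<open>open N\<close> sets
    by (simp add: continuous_on_open_vimage)
  let ?count = "\<lambda>x. \<Sum>j<L. indicator ((h ^^ j) -` N) x :: real"
  have integrable: "integrable \<mu> ?count"
    by (auto simp: integrable_indicator_iff space pre_sets less_top[symmetric])
  have "L * measure \<mu> N = (\<Sum>j<L. measure \<mu> ((h ^^ j) -` N))"
    using inv_measures_measure_funpow_vimage[OF \<mu> assms(2)] \<open>open N\<close> by simp
  also have "\<dots> = integral\<^sup>L \<mu> ?count"
    by (subst Bochner_Integration.integral_sum)
       (auto simp: integrable_indicator_iff space pre_sets less_top[symmetric])
  also have "\<dots> \<le> integral\<^sup>L \<mu> (\<lambda>x. real m)"
  proof (rule integral_mono[OF integrable])
    fix x
    have "?count x = card {j\<in>{..<L}. (h ^^ j) x \<in> N}"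
      by (simp add: indicator_def sum.If_cases Int_def)
    then show "?count x \<le> real m" using visits by simp
  qed simp
  also have "\<dots> = m" using prob_space by simp
  finally show ?thesis .
qed

lemma top_small_nbhd_small_inv_measure:
  fixes h :: "'a::metric_space \<Rightarrow> 'a"
  assumes "compact (UNIV :: 'a set)" "continuous_on UNIV h" "bij h"
    and "top_small h E" "\<epsilon> > 0"
  shows "\<exists>N. open N \<and> E \<subseteq> N \<and> (\<forall>\<mu>\<in>inv_measures h. measure \<mu> N < \<epsilon>)"
proof -
  obtain m where visits: "\<And>S x. finite S \<Longrightarrow> card S = Suc m \<Longrightarrow> \<exists>j\<in>S. (h ^^ j) x \<notin> E"
    using top_small_bounded_visits[OF assms(4,3)] by blast
  define L where "L = nat \<lceil>m / \<epsilon>\<rceil> + 1"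
  have "m / \<epsilon> < L" unfolding L_def by linarith
  then have m_lt: "m < L * \<epsilon>" using \<open>\<epsilon> > 0\<close> by (simp add: divide_less_eq)
  have "closed E" using assms(4) unfolding top_small_def by simp
  have "\<exists>N. open N \<and> E \<subseteq> N \<and> (\<forall>x. card {j\<in>{..<L}. (h ^^ j) x \<in> N} \<le> m)"
    by (rule open_nbhd_bounded_visits[OF assms(1,2) \<open>closed E\<close>]) (fact visits)
  then obtain N
    where N: "open N" "E \<subseteq> N" "\<forall>x. card {j\<in>{..<L}. (h ^^ j) x \<in> N} \<le> m"
    by (elim exE conjE)
  have "measure \<mu> N < \<epsilon>" if "\<mu> \<in> inv_measures h" for \<mu>
  proof -
    have "L * measure \<mu> N \<le> m"
      by (rule inv_measures_measure_le_visits[OF that assms(2) N(1)]) (use N(3) in blast)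
    then have "L * measure \<mu> N < L * \<epsilon>" using m_lt by linarith
    moreover have "0 < real L" unfolding L_def by simp
    ultimately show ?thesis by (simp add: mult_less_cancel_left_pos)
  qed
  then show ?thesis using N(1,2) by blast
qed

lemma small_boundary_nbhd:
  fixes h :: "'a::metric_space \<Rightarrow> 'a"
  assumes "compact (UNIV :: 'a set)" "top_small_boundary_property h"
    and "closed F" "open U" "F \<subseteq> U"
  obtains W where "open W" "F \<subseteq> W" "closure W \<subseteq> U" "top_small h (frontier W)"
proof -
  have "compact F" "compact (- U)"
    using compact_Int_closed[OF assms(1), of F] compact_Int_closed[OF assms(1), of "- U"] assms(3,4)
    by auto
  moreover have "F \<inter> - U = {}" using assms(5) by blast
  ultimately have "\<exists>W V. open W \<and> open V \<and> F \<subseteq> W \<and> - U \<subseteq> V \<and>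
      closure W \<inter> closure V = {} \<and> top_small h (frontier W)"
    using assms(2) unfolding top_small_boundary_property_def by simp
  then obtain W V where "open W" "F \<subseteq> W" "- U \<subseteq> V" "closure W \<inter> closure V = {}"
      "top_small h (frontier W)"
    by (elim exE conjE)
  moreover have "closure W \<subseteq> U" using calculation(3,4) closure_subset[of V] by blast
  ultimately show ?thesis using that by blast
qed

lemma is_homeo_imp_continuous_bij:
  assumes "is_homeo h"
  shows "continuous_on UNIV h" "bij h"
proof -
  obtain g where hom: "homeomorphism UNIV UNIV h g"
    using assms unfolding is_homeo_def by blast
  then show "continuous_on UNIV h" by (simp add: homeomorphism_def)
  show "bij h"
    using hom unfolding homeomorphism_def bij_def inj_on_def surj_def by (metis UNIV_I)
qed

lemma open_between_closure_and_frontier_nbhd: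
  fixes W U N :: "'a::metric_space set"
  assumes "open W" "open U" "closure W \<subseteq> U" "open N" "frontier W \<subseteq> N"
  obtains V where "open V" "closure W \<subseteq> V" "closure V \<subseteq> U" "V - closure W \<subseteq> N"
proof -
  have "normal_space (euclidean :: 'a topology)"
    by (rule metrizable_imp_normal_space[OF metrizable_space_euclidean])
  then have "\<exists>U1. open U1 \<and> closure W \<subseteq> U1 \<and> closure U1 \<subseteq> U"
    using assms(2,3) unfolding normal_space_alt by simp
  then obtain U1 where U1: "open U1" "closure W \<subseteq> U1" "closure U1 \<subseteq> U"
    by (elim exE conjE)
  define V where "V = U1 \<inter> (W \<union> N)"
  have "open V" unfolding V_def using U1(1) assms(1,4) by auto
  moreover have "closure W \<subseteq> V" unfolding V_def using U1(2) assms(5) closure_Un_frontier[of W] by auto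
  moreover have "closure V \<subseteq> U" unfolding V_def using U1(3) closure_mono[of V U1] V_def by auto
  moreover have "V - closure W \<subseteq> N" unfolding V_def using closure_subset[of W] by auto
  ultimately show ?thesis using that by blast
qed

theorem lemma4p8:
  fixes h :: "'a::metric_space \<Rightarrow> 'a" and \<epsilon> :: real
    and F U :: "'a set"
  assumes "compact (UNIV :: 'a set)" and "infinite (UNIV :: 'a set)"
    and "minimal_homeo h" and "top_small_boundary_property h"
    and "\<epsilon> > 0"
    and "closed F" and "open U" and "F \<subseteq> U"
  shows "\<exists>K V. closed K \<and> open V \<and> F \<subseteq> K \<and> K \<subseteq> V \<and> closure V \<subseteq> U \<and>
           (\<forall>\<mu>\<in>inv_measures h. measure \<mu> (V - K) < \<epsilon>)"
proof -
  have "continuous_on UNIV h" "bij h"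
    using is_homeo_imp_continuous_bij assms(3) unfolding minimal_homeo_def by blast+
  obtain W where W: "open W" "F \<subseteq> W" "closure W \<subseteq> U" "top_small h (frontier W)"
    using small_boundary_nbhd[OF assms(1,4,6,7,8)] .
  have "\<exists>N. open N \<and> frontier W \<subseteq> N \<and> (\<forall>\<mu>\<in>inv_measures h. measure \<mu> N < \<epsilon>)"
    using top_small_nbhd_small_inv_measure[OF assms(1) \<open>continuous_on UNIV h\<close> \<open>bij h\<close> W(4) assms(5)] .
  then obtain N where N: "open N" "frontier W \<subseteq> N" "\<forall>\<mu>\<in>inv_measures h. measure \<mu> N < \<epsilon>"
    by (elim exE conjE)
  obtain V where V: "open V" "closure W \<subseteq> V" "closure V \<subseteq> U" "V - closure W \<subseteq> N"
    using open_between_closure_and_frontier_nbhd[OF W(1) assms(7) W(3) N(1,2)] .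
  have "measure \<mu> (V - closure W) < \<epsilon>" if \<mu>: "\<mu> \<in> inv_measures h" for \<mu>
  proof -
    interpret prob_space \<mu> using \<mu> unfolding inv_measures_def by simp
    have "measure \<mu> (V - closure W) \<le> measure \<mu> N"
      using \<mu> \<open>open N\<close> V(4) by (intro finite_measure_mono) (auto simp: inv_measures_def)
    then show ?thesis using N(3) \<mu> by fastforce
  qed
  then show ?thesis
    using V(1-3) W(2) closure_subset[of W] by (intro exI[of _ "closure W"] exI[of _ V]) auto
qed

end
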